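(* Let $\varphi\in\Phi$ be arbitrary. Then there exist uncountably many entire transcendental functions $f(z)=c_0+c_1z+c_2z^2+\cdots$ with all $c_j\in\mathbb{Q}\setminus\{0\}$ such that for every $s\in\{0,1,2,\ldots\}$: (i) $f^{(s)}(0)\in\mathbb{Q}$; (ii) $f^{(s)}(\mathbb{Q}\setminus\{0\})\subseteq\mathscr{L}$; (iii) $f^{(s)}(\mathscr{L}_{\varphi}^{\ast})\subseteq\mathscr{L}$.
   Context: An entire transcendental function is an entire function that is not a polynomial. $\mathscr{L}$ is the set of Liouville numbers (real irrational $\zeta$ such that for every $\eta>0$ there are infinitely many rationals $y/x$, $x\geq1$, with $|\zeta-y/x|\leq x^{-\eta}$). $\Vert\alpha\Vert$ is the distance from $\alpha$ to the nearest integer. $\Phi$ is the set of non-decreasing $\varphi:\mathbb{R}_{\geq 2}\to\mathbb{R}_{\geq 2}$ with $\lim_{x\to\infty}\varphi(x)=\infty$. For $\varphi\in\Phi$, $\mathscr{L}_{\varphi}^{\ast}$ is the set of $\zeta\in\mathscr{L}$ for which there is $N_0(\zeta)$ such that for every integer $N\geq N_0(\zeta)$ there is an integer $q$ with $2\leq q\leq\varphi(N)$ and $\Vert q\zeta\Vert\leq q^{-N}$. $f^{(s)}$ is the $s$-th derivative, $f^{(0)}=f$. *)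

theory Defs
  imports "HOL-Analysis.Analysis"
begin

definition Liouville_set :: "real set" where
  "Liouville_set = {\<zeta>. \<zeta> \<notin> \<rat> \<and>
     (\<forall>\<eta>>0. infinite {r :: real. \<exists>y x :: int. x \<ge> 1 \<and> r = of_int y / of_int x \<and>
        \<bar>\<zeta> - of_int y / of_int x\<bar> \<le> (of_int x) powr (- \<eta>)})}"

definition dist_int :: "real \<Rightarrow> real" where
  "dist_int \<alpha> = (INF k\<in>(\<int>::real set). \<bar>\<alpha> - k\<bar>)"

definition Phi_class :: "(real \<Rightarrow> real) set" where
  "Phi_class = {\<phi>. mono_on {2..} \<phi> \<and> (\<forall>x\<ge>2. \<phi> x \<ge> 2) \<and> filterlim \<phi> at_top at_top}"

definition Liouville_phi_star :: "(real \<Rightarrow> real) \<Rightarrow> real set" where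
  "Liouville_phi_star \<phi> = {\<zeta> \<in> Liouville_set. \<exists>N0::nat. \<forall>N::nat\<ge>N0.
      \<exists>q::int. 2 \<le> q \<and> real_of_int q \<le> \<phi> (real N) \<and>
        dist_int (of_int q * \<zeta>) \<le> (of_int q) powr (- real N)}"

definition entire_transcendental :: "(complex \<Rightarrow> complex) \<Rightarrow> bool" where
  "entire_transcendental f \<longleftrightarrow> f holomorphic_on UNIV \<and>
     \<not> (\<exists>p :: complex poly. \<forall>z. f z = poly p z)"

end

theory Submission
  imports Defs
begin

text \<open>
  Take f(z) = \<Sum>_k a_k z^k / D_k, where the digits a_k \<in> {1, 2} encode an arbitrary bit
  sequence (so there are uncountably many such f) and D_k divides D_(k+1) and grows so fast
  that f^(s) is entire with rational Taylor coefficients at 0.  Nonzero rationals and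
  elements of L*_\<phi> both admit, for all large N, approximations p/q with q \<le> \<phi>(N) and
  |\<zeta> - p/q| \<le> q^-(N+1).  Choosing N in terms of n, the n-th partial sum of f^(s) at p/q
  is a fraction with denominator X = q^n D_(n+s) that approximates f^(s)(\<zeta>) within X^-n:
  the Lipschitz error is killed by the size of N, the tail by the growth of D.  These are
  Liouville approximations.  If f^(s)(\<zeta>) were a rational a/B, the approximating fractions
  would eventually equal a/B; the rational root theorem then bounds the reduced denominator
  of p/q polynomially in n, so consecutive approximations p/q coincide and hence equal \<zeta>.
  Then two consecutive partial sums at \<zeta> agree, contradicting the positivity of the
  coefficients.
\<close>

section \<open>Power series\<close>

lemma diffs_funpow:
  "(diffs ^^ s) c k = of_nat (pochhammer (Suc k) s) * c (k + s)"
proof (induction s arbitrary: k)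
  case (Suc s)
  have "(diffs ^^ Suc s) c k = of_nat (Suc k) * (diffs ^^ s) c (Suc k)"
    by (simp add: diffs_def)
  then show ?case by (simp add: Suc pochhammer_rec algebra_simps)
qed simp

lemma pochhammer_Suc_le_power: "pochhammer (Suc k) s \<le> (k + s) ^ s"
proof (induction s arbitrary: k)
  case (Suc s)
  have "pochhammer (Suc k) (Suc s) = Suc k * pochhammer (Suc (Suc k)) s"
    by (simp add: pochhammer_rec)
  also have "\<dots> \<le> (k + Suc s) * (k + Suc s) ^ s"
    using Suc[of "Suc k"] by (intro mult_le_mono) auto
  finally show ?case by simp
qed simp

lemma pochhammer_Suc_pos: "0 < pochhammer (Suc k) s"
  by (rule pochhammer_pos) simp

lemma summable_diffs_funpow:
  fixes c :: "nat \<Rightarrow> 'a::{real_normed_field,banach}"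
  assumes "\<And>z. summable (\<lambda>n. c n * z ^ n)"
  shows "summable (\<lambda>n. (diffs ^^ s) c n * z ^ n)"
proof (induction s arbitrary: z)
  case (Suc s)
  show ?case using termdiff_converges_all[OF Suc] by simp
qed (use assms in simp)

lemma deriv_funpow_powser:
  fixes c :: "nat \<Rightarrow> 'a::{real_normed_field,banach}"
  assumes "\<And>z. summable (\<lambda>n. c n * z ^ n)"
  shows "(deriv ^^ s) (\<lambda>z. \<Sum>n. c n * z ^ n) = (\<lambda>z. \<Sum>n. (diffs ^^ s) c n * z ^ n)"
proof (induction s)
  case (Suc s)
  show ?case
    using DERIV_imp_deriv[OF termdiffs_strong_converges_everywhere[OF summable_diffs_funpow[OF assms]]] Suc
    by auto
qed simp

lemma powser_nonneg_abs_le: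
  fixes a :: "nat \<Rightarrow> real"
  assumes "\<And>k. 0 \<le> a k" "\<And>t. summable (\<lambda>k. a k * t ^ k)" "\<bar>t\<bar> \<le> R"
  shows "\<bar>\<Sum>k. a k * t ^ k\<bar> \<le> (\<Sum>k. a k * R ^ k)"
proof -
  have "\<bar>a k * t ^ k\<bar> \<le> a k * R ^ k" for k
    using assms by (simp add: abs_mult power_abs mult_left_mono power_mono)
  then show ?thesis
    using norm_suminf_le[of "\<lambda>k. a k * t ^ k"] assms(2) by simp
qed

lemma powser_nonneg_lipschitz:
  fixes a :: "nat \<Rightarrow> real"
  assumes "\<And>k. 0 \<le> a k" "\<And>t. summable (\<lambda>k. a k * t ^ k)" "\<bar>t\<bar> \<le> R" "\<bar>u\<bar> \<le> R"
  shows "\<bar>(\<Sum>k. a k * t ^ k) - (\<Sum>k. a k * u ^ k)\<bar> \<le> (\<Sum>k. diffs a k * R ^ k) * \<bar>t - u\<bar>"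
proof -
  have "norm ((\<Sum>k. a k * t ^ k) - (\<Sum>k. a k * u ^ k)) \<le> (\<Sum>k. diffs a k * R ^ k) * norm (t - u)"
  proof (rule field_differentiable_bound[where S = "{-R..R}" and f = "\<lambda>x. \<Sum>k. a k * x ^ k"
        and f' = "\<lambda>x. \<Sum>k. diffs a k * x ^ k"])
    show "((\<lambda>x. \<Sum>k. a k * x ^ k) has_field_derivative (\<Sum>k. diffs a k * x ^ k)) (at x within {-R..R})" for x
      using termdiffs_strong_converges_everywhere[OF assms(2)] by (rule has_field_derivative_at_within)
    show "norm (\<Sum>k. diffs a k * x ^ k) \<le> (\<Sum>k. diffs a k * R ^ k)" if "x \<in> {-R..R}" for x
      using that powser_nonneg_abs_le[of "diffs a" x R] termdiff_converges_all[OF assms(2)] assms(1)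
      by (auto simp: diffs_def)
  qed (use assms in auto)
  then show ?thesis by simp
qed

section \<open>Diophantine lemmas\<close>

lemma Liouville_setI:
  fixes \<zeta> :: real
  assumes irrational: "\<zeta> \<notin> \<rat>"
    and approx: "\<And>k::nat. \<exists>(x::int) (y::int). 1 \<le> x \<and> int k \<le> x \<and> \<bar>\<zeta> - y / x\<bar> \<le> 1 / real_of_int x ^ k"
  shows "\<zeta> \<in> Liouville_set"
  unfolding Liouville_set_def
proof (intro CollectI conjI allI impI irrational)
  fix \<eta> :: real assume "\<eta> > 0"
  define S where "S = {r :: real. \<exists>y x :: int. x \<ge> 1 \<and> r = of_int y / of_int x \<and>
        \<bar>\<zeta> - of_int y / of_int x\<bar> \<le> (of_int x) powr (- \<eta>)}"
  have "\<exists>r\<in>S. r \<noteq> \<zeta> \<and> dist r \<zeta> < \<epsilon>" if "\<epsilon> > 0" for \<epsilon>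
  proof -
    obtain k :: nat where k: "\<eta> \<le> k" "1 / \<epsilon> < k"
      by (metis max.bounded_iff max.strict_boundedE reals_Archimedean2 less_eq_real_def)
    then have "k \<ge> 1" using \<open>\<eta> > 0\<close> by linarith
    obtain x y :: int where xy: "1 \<le> x" "int k \<le> x" "\<bar>\<zeta> - y / x\<bar> \<le> 1 / real_of_int x ^ k"
      using approx by blast
    define X where "X = real_of_int x"
    have X: "1 \<le> X" "real k \<le> X" using xy by (simp_all add: X_def)
    have "X powr \<eta> \<le> X powr real k" using k(1) X(1) by (rule powr_mono)
    then have "1 / X ^ k \<le> X powr (- \<eta>)"
      using X(1) by (simp add: powr_minus powr_realpow divide_simps)
    then have "y / x \<in> S" unfolding S_def using xy X_def by fastforce
    moreover have "y / x \<noteq> \<zeta>" using irrational by auto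
    moreover have "1 / X ^ k < \<epsilon>"
    proof -
      have "real k \<le> X ^ k"
        using X \<open>k \<ge> 1\<close> power_increasing[of 1 k X] by simp
      then have "1 / X ^ k \<le> 1 / real k" using \<open>k \<ge> 1\<close> by (intro divide_left_mono) auto
      also have "\<dots> < \<epsilon>" using k(2) \<open>\<epsilon> > 0\<close> \<open>k \<ge> 1\<close> by (simp add: field_simps)
      finally show ?thesis .
    qed
    ultimately show ?thesis using xy(3) unfolding X_def by (auto simp: dist_real_def abs_minus_commute)
  qed
  then have "\<zeta> islimpt S" by (simp add: islimpt_approachable)
  then show "infinite S" using islimpt_finite by blast
qed

lemma dist_int_eq_round: "dist_int \<alpha> = \<bar>\<alpha> - round \<alpha>\<bar>"
  unfolding dist_int_def
proof (rule cInf_eq_minimum)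
  fix z assume "z \<in> (\<lambda>k. \<bar>\<alpha> - k\<bar>) ` \<int>"
  then obtain m :: int where z: "z = \<bar>\<alpha> - m\<bar>" by (auto simp: Ints_def)
  have "\<bar>round \<alpha> - \<alpha>\<bar> \<le> 1/2" by (rule of_int_round_abs_le)
  moreover have "1 \<le> \<bar>real_of_int m - round \<alpha>\<bar>" if "m \<noteq> round \<alpha>"
  proof -
    have "1 \<le> \<bar>m - round \<alpha>\<bar>" using that by linarith
    then show ?thesis by (metis of_int_1_le_iff of_int_abs of_int_diff)
  qed
  ultimately show "\<bar>\<alpha> - round \<alpha>\<bar> \<le> z" using z by (cases "m = round \<alpha>") linarith+
qed (auto simp: Ints_def)

lemma rat_eq_of_close:
  fixes u v u' v' :: int and V V' :: real
  assumes "0 < v" "v \<le> V" "0 < v'" "v' \<le> V'" "\<bar>u / v - u' / v'\<bar> < 1 / (V * V')"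
  shows "u / v = u' / v'"
proof (rule ccontr)
  assume "real_of_int u / v \<noteq> u' / v'"
  then have "real_of_int (u * v') \<noteq> real_of_int (u' * v)" using assms(1,3) by (simp add: field_simps)
  then have "u * v' - u' * v \<noteq> 0" by (metis eq_iff_diff_eq_0)
  then have num: "1 \<le> \<bar>real_of_int (u * v' - u' * v)\<bar>" by linarith
  have den: "0 < real_of_int (v * v')" "real_of_int (v * v') \<le> V * V'"
    using assms(1-4) by (simp_all add: mult_mono)
  have "1 / (V * V') \<le> 1 / real_of_int (v * v')"
    using den by (intro divide_left_mono) auto
  also have "\<dots> \<le> \<bar>real_of_int (u * v' - u' * v)\<bar> / real_of_int (v * v')"
    using num den by (intro divide_right_mono) auto
  also have "\<dots> = \<bar>u / v - u' / v'\<bar>"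
    using assms(1,3) by (simp add: field_simps abs_divide)
  finally show False using assms(5) by linarith
qed

lemma dvd_last_coeff_of_root:
  fixes u v :: int and e :: "nat \<Rightarrow> int"
  assumes "coprime u v" "1 \<le> n" "v dvd (\<Sum>k\<le>n. e k * u ^ k * v ^ (n - k))"
  shows "v dvd e n"
proof -
  have "v dvd (\<Sum>k<n. e k * u ^ k * v ^ (n - k))"
    by (intro dvd_sum) (simp add: dvd_power)
  then have "v dvd e n * u ^ n"
    using assms(3) by (simp add: lessThan_Suc_atMost[symmetric] dvd_add_right_iff)
  moreover have "coprime v (u ^ n)" using assms(1) by (simp add: coprime_commute)
  ultimately show ?thesis using coprime_dvd_mult_left_iff by blast
qed

lemma eq_of_rational_approximations:
  fixes \<zeta> :: real and x e B :: "nat \<Rightarrow> real"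
  assumes den: "\<And>n. n0 \<le> n \<Longrightarrow> \<exists>(u::int) (v::int). 0 < v \<and> v \<le> B n \<and> x n = u / v"
    and close: "\<And>n. n0 \<le> n \<Longrightarrow> \<bar>\<zeta> - x n\<bar> \<le> e n"
    and small: "\<And>n. n0 \<le> n \<Longrightarrow> 2 * e n * (B n * B (Suc n)) < 1"
    and "decseq e" "e \<longlonglongrightarrow> 0" "n0 \<le> n"
  shows "x n = \<zeta>"
proof -
  have step: "x (Suc m) = x m" if m: "n0 \<le> m" for m
  proof -
    obtain u v :: int where uv: "0 < v" "v \<le> B m" "x m = u / v"
      using den[OF m] by auto
    obtain u' v' :: int where uv': "0 < v'" "v' \<le> B (Suc m)" "x (Suc m) = u' / v'"
      using den[of "Suc m"] m by auto
    define P where "P = B m * B (Suc m)"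
    have P: "0 < P" using uv uv' by (simp add: P_def mult_pos_pos)
    have "e (Suc m) \<le> e m" using \<open>decseq e\<close> by (simp add: decseq_Suc_iff)
    then have "\<bar>x m - x (Suc m)\<bar> \<le> 2 * e m" using close[OF m] close[of "Suc m"] m by arith
    then have "P * \<bar>x m - x (Suc m)\<bar> \<le> P * (2 * e m)" using P by (intro mult_left_mono) auto
    also have "\<dots> < 1" using small[OF m] by (simp add: P_def mult_ac)
    finally have "\<bar>u / v - u' / v'\<bar> < 1 / (B m * B (Suc m))"
      using P uv(3) uv'(3) by (simp add: P_def field_simps)
    then show ?thesis using uv uv' by (metis rat_eq_of_close)
  qed
  have const: "x m = x n0" if "n0 \<le> m" for m
    using that by (induction m rule: dec_induct) (simp_all add: step)
  have "\<forall>m\<ge>n0. \<bar>\<zeta> - x n0\<bar> \<le> e m" using const close by metis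
  then have "\<bar>\<zeta> - x n0\<bar> \<le> 0" by (intro LIMSEQ_le_const[OF \<open>e \<longlonglongrightarrow> 0\<close>]) blast
  then show ?thesis using const[OF \<open>n0 \<le> n\<close>] by simp
qed

lemma poly_lt_two_power_square:
  fixes B j s :: nat
  assumes "8 * B ^ 2 \<le> j" "2 * s + 1 \<le> j"
  shows "2 * (2 * B * j ^ s) * (2 * B * Suc j ^ s) < 2 ^ (j * j)"
proof -
  have "Suc j ^ s \<le> 2 ^ (j * s)"
    using power_mono[OF Suc_leI[OF less_exp[of j]], of s] by (simp add: power_mult)
  then have "2 * (2 * B * j ^ s) * (2 * B * Suc j ^ s) \<le> 8 * B ^ 2 * (2 ^ (j * s) * 2 ^ (j * s))"
    using power_mono[of j "Suc j" s] by (simp add: power2_eq_square mult_le_mono)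
  also have "\<dots> < 2 ^ j * 2 ^ (2 * j * s)"
  proof -
    have "8 * B ^ 2 < 2 ^ j" using assms(1) less_exp[of j] by linarith
    from mult_strict_right_mono[OF this, of "2 ^ (2 * j * s)"] show ?thesis
      by (simp add: power_add[symmetric] mult_2 add_mult_distrib)
  qed
  also have "\<dots> = 2 ^ (j * (2 * s + 1))" by (simp add: power_add[symmetric] algebra_simps)
  also have "\<dots> \<le> 2 ^ (j * j)" using mult_le_mono2[OF assms(2), of j] by (intro power_increasing) auto
  finally show ?thesis .
qed

lemma eq_of_rational_approximations_pow2:
  fixes \<zeta> :: real and x :: "nat \<Rightarrow> real" and B :: nat
  assumes den: "\<And>n. n0 \<le> n \<Longrightarrow> \<exists>(u::int) (v::int). 0 < v \<and> v \<le> int (2 * B * (n + s) ^ s) \<and> x n = u / v"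
    and close: "\<And>n. n0 \<le> n \<Longrightarrow> \<bar>\<zeta> - x n\<bar> \<le> 1 / 2 ^ ((n + s) * (n + s))"
    and "8 * B ^ 2 + 2 * s + 1 \<le> n0" "n0 \<le> n"
  shows "x n = \<zeta>"
proof (rule eq_of_rational_approximations[where B = "\<lambda>n. real (2 * B * (n + s) ^ s)"
      and e = "\<lambda>n. (1 / 2) ^ ((n + s) * (n + s))"])
  show "\<exists>(u::int) (v::int). 0 < v \<and> v \<le> real (2 * B * (m + s) ^ s) \<and> x m = u / v" if m: "n0 \<le> m" for m
  proof -
    obtain u v :: int where "0 < v" "v \<le> int (2 * B * (m + s) ^ s)" "x m = u / v"
      using den[OF m] by blast
    moreover from \<open>v \<le> int (2 * B * (m + s) ^ s)\<close> have "real_of_int v \<le> real (2 * B * (m + s) ^ s)"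
      by (metis of_int_le_iff of_int_of_nat_eq)
    ultimately show ?thesis by auto
  qed
  show "\<bar>\<zeta> - x m\<bar> \<le> (1 / 2) ^ ((m + s) * (m + s))" if "n0 \<le> m" for m
    using close[OF that] by (simp add: power_one_over)
  show "2 * (1 / 2) ^ ((m + s) * (m + s)) * (real (2 * B * (m + s) ^ s) * real (2 * B * (Suc m + s) ^ s)) < 1"
    if "n0 \<le> m" for m
  proof -
    have "2 * (2 * B * (m + s) ^ s) * (2 * B * Suc (m + s) ^ s) < 2 ^ ((m + s) * (m + s))"
      using that assms(3) by (intro poly_lt_two_power_square) auto
    then have "real (2 * (2 * B * (m + s) ^ s) * (2 * B * Suc (m + s) ^ s)) < 2 ^ ((m + s) * (m + s))"
      by (metis of_nat_less_iff of_nat_numeral of_nat_power)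
    then show ?thesis by (simp add: power_one_over field_simps)
  qed
  have "strict_mono (\<lambda>n. (n + s) * (n + s))" by (intro strict_monoI mult_strict_mono) auto
  then show "(\<lambda>n. (1 / 2 :: real) ^ ((n + s) * (n + s))) \<longlonglongrightarrow> 0"
    using LIMSEQ_subseq_LIMSEQ[OF LIMSEQ_power_zero[of "1 / 2 :: real"]] by (simp add: o_def)
  show "decseq (\<lambda>n. (1 / 2 :: real) ^ ((n + s) * (n + s)))"
    unfolding decseq_def by (auto intro!: power_decreasing mult_le_mono)
qed (use assms(4) in simp)

section \<open>The denominators\<close>

text \<open>
  For the n-th partial sum of the s-th derivative put j = n + s.  The point \<zeta> is approximated
  by p/q at order N = \<open>approx_order j (denom \<phi> j)\<close>, so q \<le> \<open>denom_bound \<phi> j (denom \<phi> j)\<close>, and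
  \<open>tail_factor\<close> then dominates twice the n-th power of the denominator q^n (denom \<phi> j).  The
  factors i^(2i) 2^i in the recursion for \<open>denom\<close> absorb the factorials and the powers of
  |\<zeta>| + 1 in the tail of the series.
\<close>

definition approx_order :: "nat \<Rightarrow> nat \<Rightarrow> nat" where
  "approx_order j d = j * j + j * d + j"

definition denom_bound :: "(real \<Rightarrow> real) \<Rightarrow> nat \<Rightarrow> nat \<Rightarrow> nat" where
  "denom_bound \<phi> j d = max 2 (nat \<lceil>\<phi> (approx_order j d)\<rceil>)"

definition tail_factor :: "(real \<Rightarrow> real) \<Rightarrow> nat \<Rightarrow> nat \<Rightarrow> nat" where
  "tail_factor \<phi> j d = 2 * (denom_bound \<phi> j d ^ j * d) ^ j"

fun denom :: "(real \<Rightarrow> real) \<Rightarrow> nat \<Rightarrow> nat" where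
  "denom \<phi> 0 = 1"
| "denom \<phi> (Suc i) = denom \<phi> i * Suc i ^ (2 * Suc i) * 2 ^ Suc i * tail_factor \<phi> i (denom \<phi> i)"

lemma tail_factor_pos: "0 < d \<Longrightarrow> 0 < tail_factor \<phi> j d"
  by (simp add: tail_factor_def denom_bound_def less_max_iff_disj)

lemma denom_pos: "0 < denom \<phi> i"
  by (induction i) (simp_all add: tail_factor_pos)

lemma denom_dvd: "i \<le> k \<Longrightarrow> denom \<phi> i dvd denom \<phi> k"
proof (induction k rule: dec_induct)
  case (step k)
  have "denom \<phi> k dvd denom \<phi> (Suc k)" by (simp only: denom.simps mult.assoc dvd_triv_left)
  with step.IH show ?case by (rule dvd_trans)
qed simp

lemma denom_mono: "i \<le> k \<Longrightarrow> denom \<phi> i \<le> denom \<phi> k"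
  using denom_dvd denom_pos by (simp add: dvd_imp_le)

lemma fact_le_denom: "fact k \<le> denom \<phi> k"
proof (induction k)
  case (Suc k)
  have "Suc k \<le> Suc k ^ (2 * Suc k)"
    using power_increasing[of 1 "2 * Suc k" "Suc k"] by simp
  moreover have "1 \<le> 2 ^ Suc k * tail_factor \<phi> k (denom \<phi> k)"
    using tail_factor_pos[OF denom_pos] by (simp add: Suc_le_eq)
  ultimately have "denom \<phi> k * Suc k * 1 \<le> denom \<phi> k * Suc k ^ (2 * Suc k) * (2 ^ Suc k * tail_factor \<phi> k (denom \<phi> k))"
    by (intro mult_le_mono mult_le_mono2)
  then have step: "Suc k * denom \<phi> k \<le> denom \<phi> (Suc k)" by (simp add: ac_simps)
  have "fact (Suc k) = Suc k * fact k" by simp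
  also have "\<dots> \<le> Suc k * denom \<phi> k" using Suc.IH by (rule mult_le_mono2)
  also have "\<dots> \<le> denom \<phi> (Suc k)" by (rule step)
  finally show ?case .
qed simp

lemma le_denom: "k \<le> denom \<phi> k"
  using fact_le_denom[of k \<phi>] fact_ge_self[of k] by linarith

lemma denom_bound_mono:
  assumes "mono_on {2..} \<phi>" "1 \<le> j" "j \<le> j'" "1 \<le> d" "d \<le> d'"
  shows "denom_bound \<phi> j d \<le> denom_bound \<phi> j' d'"
proof -
  have "1 \<le> j * d" using assms(2,4) by simp
  then have le: "2 \<le> approx_order j d" using assms(2) unfolding approx_order_def by linarith
  have "approx_order j d \<le> approx_order j' d'"
    using mult_le_mono[OF assms(3) assms(3)] mult_le_mono[OF assms(3) assms(5)] assms(3)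
    unfolding approx_order_def by linarith
  with le have "\<phi> (approx_order j d) \<le> \<phi> (approx_order j' d')"
    by (intro mono_onD[OF assms(1)]) simp_all
  then show ?thesis
    unfolding denom_bound_def by (meson ceiling_mono max.mono nat_mono order_refl)
qed

lemma tail_factor_mono:
  assumes "mono_on {2..} \<phi>" "1 \<le> j" "j \<le> j'" "1 \<le> d" "d \<le> d'"
  shows "tail_factor \<phi> j d \<le> tail_factor \<phi> j' d'"
proof -
  let ?a = "denom_bound \<phi> j d" and ?b = "denom_bound \<phi> j' d'"
  have b: "1 \<le> ?b" by (simp add: denom_bound_def)
  have "?a ^ j \<le> ?b ^ j" using denom_bound_mono[OF assms] by (rule power_mono) simp
  also have "\<dots> \<le> ?b ^ j'" using assms(3) b by (rule power_increasing)
  finally have ab: "?a ^ j * d \<le> ?b ^ j' * d'" using assms(5) by (rule mult_le_mono)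
  have b': "1 \<le> ?b ^ j' * d'" using b assms(4,5) by (simp add: one_le_power)
  have "(?a ^ j * d) ^ j \<le> (?b ^ j' * d') ^ j" using ab by (rule power_mono) simp
  also have "\<dots> \<le> (?b ^ j' * d') ^ j'" using assms(3) b' by (rule power_increasing)
  finally show ?thesis by (simp add: tail_factor_def)
qed

lemma denom_ge_tail_factor:
  assumes "mono_on {2..} \<phi>" "1 \<le> j" "j < i"
  shows "i ^ (2 * i) * 2 ^ i * tail_factor \<phi> j (denom \<phi> j) \<le> denom \<phi> i"
proof -
  obtain m where m: "i = Suc m" "j \<le> m" using assms(3) by (cases i) auto
  have "tail_factor \<phi> j (denom \<phi> j) \<le> tail_factor \<phi> m (denom \<phi> m)"
    using assms(1,2) m(2) denom_pos denom_mono
    by (intro tail_factor_mono) (auto simp: Suc_le_eq)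
  then have "1 * (i ^ (2 * i) * 2 ^ i * tail_factor \<phi> j (denom \<phi> j))
      \<le> denom \<phi> m * (i ^ (2 * i) * 2 ^ i * tail_factor \<phi> m (denom \<phi> m))"
    using denom_pos[of \<phi> m] by (intro mult_le_mono) auto
  also have "\<dots> = denom \<phi> i" using m by (simp add: mult.assoc)
  finally show ?thesis by simp
qed

section \<open>Approximable points\<close>

text \<open>
  The condition \<parallel>q\<zeta>\<parallel> \<le> q^-N of \<open>Liouville_phi_star\<close>, rewritten as |\<zeta> - p/q| \<le> q^-(N+1);
  rationals satisfy it as well.
\<close>

definition phi_approximable :: "(real \<Rightarrow> real) \<Rightarrow> real \<Rightarrow> bool" where
  "phi_approximable \<phi> \<zeta> \<longleftrightarrow> (\<exists>N0. \<forall>N\<ge>N0. \<exists>(q::int) (p::int).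
      2 \<le> q \<and> real_of_int q \<le> \<phi> (real N) \<and> \<bar>\<zeta> - p / q\<bar> \<le> 1 / real_of_int q ^ Suc N)"

lemma phi_approximable_rational:
  assumes "filterlim \<phi> at_top at_top" "r \<in> \<rat>"
  shows "phi_approximable \<phi> r"
proof -
  obtain a b :: int where ab: "0 < b" "r = a / b" using Rats_cases'[OF assms(2)] by metis
  obtain N0 where "\<forall>x\<ge>N0. real_of_int (2 * b) \<le> \<phi> x"
    using assms(1) by (auto simp: filterlim_at_top eventually_at_top_linorder)
  then have "\<forall>N\<ge>nat \<lceil>N0\<rceil>. 2 \<le> 2 * b \<and> real_of_int (2 * b) \<le> \<phi> (real N) \<and>
      \<bar>r - real_of_int (2 * a) / real_of_int (2 * b)\<bar> \<le> 1 / real_of_int (2 * b) ^ Suc N"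
    using ab by (auto simp: nat_ceiling_le_eq)
  then show ?thesis unfolding phi_approximable_def by blast
qed

lemma phi_approximable_Liouville_phi_star:
  assumes "\<zeta> \<in> Liouville_phi_star \<phi>"
  shows "phi_approximable \<phi> \<zeta>"
proof -
  obtain N0 :: nat where N0: "\<And>N. N0 \<le> N \<Longrightarrow> \<exists>q::int. (2::int) \<le> q \<and> real_of_int q \<le> \<phi> (real N) \<and>
      dist_int (q * \<zeta>) \<le> q powr (- real N)"
    using assms unfolding Liouville_phi_star_def by blast
  have "\<exists>(q::int) (p::int). 2 \<le> q \<and> real_of_int q \<le> \<phi> (real N) \<and> \<bar>\<zeta> - p / q\<bar> \<le> 1 / real_of_int q ^ Suc N"
    if N: "N0 \<le> N" for N
  proof -
    obtain q :: int where q: "(2::int) \<le> q" "real_of_int q \<le> \<phi> (real N)" "dist_int (q * \<zeta>) \<le> q powr (- real N)"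
      using N0[OF N] by blast
    define p where "p = round (q * \<zeta>)"
    have "\<bar>\<zeta> - p / q\<bar> = dist_int (q * \<zeta>) / q"
      using q(1) by (simp add: dist_int_eq_round p_def field_simps abs_divide)
    also have "\<dots> \<le> q powr (- real N) / q" using q by (intro divide_right_mono) auto
    also have "\<dots> = 1 / real_of_int q ^ Suc N"
      using q(1) by (simp add: powr_minus powr_realpow divide_inverse)
    finally show ?thesis using q(1,2) by blast
  qed
  then show ?thesis unfolding phi_approximable_def by blast
qed

section \<open>The series and its derivatives\<close>

definition digit :: "(nat \<Rightarrow> bool) \<Rightarrow> nat \<Rightarrow> nat" where
  "digit b k = (if b k then 2 else 1)"

definition liouville_coeff :: "(real \<Rightarrow> real) \<Rightarrow> (nat \<Rightarrow> bool) \<Rightarrow> nat \<Rightarrow> rat" where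
  "liouville_coeff \<phi> b k = of_nat (digit b k) / of_nat (denom \<phi> k)"

definition deriv_coeff :: "(real \<Rightarrow> real) \<Rightarrow> (nat \<Rightarrow> bool) \<Rightarrow> nat \<Rightarrow> nat \<Rightarrow> real" where
  "deriv_coeff \<phi> b s k = real (pochhammer (Suc k) s * digit b (k + s)) / real (denom \<phi> (k + s))"

definition deriv_series :: "(real \<Rightarrow> real) \<Rightarrow> (nat \<Rightarrow> bool) \<Rightarrow> nat \<Rightarrow> real \<Rightarrow> real" where
  "deriv_series \<phi> b s t = (\<Sum>k. deriv_coeff \<phi> b s k * t ^ k)"

definition deriv_partial_sum :: "(real \<Rightarrow> real) \<Rightarrow> (nat \<Rightarrow> bool) \<Rightarrow> nat \<Rightarrow> nat \<Rightarrow> real \<Rightarrow> real" where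
  "deriv_partial_sum \<phi> b s n t = (\<Sum>k\<le>n. deriv_coeff \<phi> b s k * t ^ k)"

lemma digit_pos: "0 < digit b k" and digit_le_2: "digit b k \<le> 2"
  by (simp_all add: digit_def)

lemma of_rat_liouville_coeff:
  "(of_rat (liouville_coeff \<phi> b k) :: 'a::field_char_0) = of_nat (digit b k) / of_nat (denom \<phi> k)"
  unfolding liouville_coeff_def of_rat_divide of_rat_of_nat_eq ..

lemma liouville_coeff_nonzero: "liouville_coeff \<phi> b k \<noteq> 0"
  using digit_pos[of b k] denom_pos[of \<phi> k] by (simp add: liouville_coeff_def)

lemma deriv_coeff_pos: "0 < deriv_coeff \<phi> b s k"
  using digit_pos[of b "k + s"] denom_pos[of \<phi> "k + s"] pochhammer_Suc_pos[of k s]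
  by (simp add: deriv_coeff_def)

lemma diffs_funpow_liouville_coeff:
  "(diffs ^^ s) (\<lambda>k. of_rat (liouville_coeff \<phi> b k) :: 'a::real_normed_field) k = of_real (deriv_coeff \<phi> b s k)"
  by (simp add: diffs_funpow of_rat_liouville_coeff deriv_coeff_def)

lemma diffs_deriv_coeff: "diffs (deriv_coeff \<phi> b s) = deriv_coeff \<phi> b (Suc s)"
  using diffs_funpow_liouville_coeff[where 'a = real, of "Suc s" \<phi> b]
    diffs_funpow_liouville_coeff[where 'a = real, of s \<phi> b]
  by (simp add: fun_eq_iff diffs_def)

lemma summable_liouville_coeff:
  fixes z :: "'a::{real_normed_field,banach}"
  shows "summable (\<lambda>k. of_rat (liouville_coeff \<phi> b k) * z ^ k)"
proof (rule summable_comparison_test)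
  show "summable (\<lambda>k. 2 * (inverse (fact k) * norm z ^ k))"
    by (intro summable_mult summable_exp)
  have "norm (of_rat (liouville_coeff \<phi> b k) * z ^ k) \<le> 2 * (inverse (fact k) * norm z ^ k)" for k
  proof -
    have "digit b k / real (denom \<phi> k) \<le> 2 / real (denom \<phi> k)"
      using digit_le_2[of b k] by (intro divide_right_mono) auto
    also have "\<dots> \<le> 2 / fact k"
    proof (rule divide_left_mono)
      show "(fact k :: real) \<le> real (denom \<phi> k)"
        using fact_le_denom[of k \<phi>] by (metis of_nat_fact of_nat_le_iff)
    qed (use denom_pos[of \<phi> k] in auto)
    finally have "digit b k / real (denom \<phi> k) * norm z ^ k \<le> 2 / fact k * norm z ^ k"
      by (rule mult_right_mono) simp
    then show ?thesis
      by (simp add: of_rat_liouville_coeff norm_mult norm_power norm_divide norm_inverse divide_inverse mult.assoc)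
  qed
  then show "\<exists>N. \<forall>k\<ge>N. norm (of_rat (liouville_coeff \<phi> b k) * z ^ k) \<le> 2 * (inverse (fact k) * norm z ^ k)"
    by blast
qed

lemma summable_deriv_coeff: "summable (\<lambda>k. deriv_coeff \<phi> b s k * t ^ k)"
  using summable_diffs_funpow[OF summable_liouville_coeff, where s = s and z = t]
  by (simp add: diffs_funpow_liouville_coeff)

lemma deriv_series_abs_le: "\<bar>t\<bar> \<le> R \<Longrightarrow> \<bar>deriv_series \<phi> b s t\<bar> \<le> deriv_series \<phi> b s R"
  unfolding deriv_series_def
  by (rule powser_nonneg_abs_le) (auto intro: less_imp_le deriv_coeff_pos summable_deriv_coeff)

lemma deriv_series_lipschitz:
  assumes "\<bar>t\<bar> \<le> R" "\<bar>u\<bar> \<le> R"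
  shows "\<bar>deriv_series \<phi> b s t - deriv_series \<phi> b s u\<bar> \<le> deriv_series \<phi> b (Suc s) R * \<bar>t - u\<bar>"
  unfolding deriv_series_def diffs_deriv_coeff[symmetric]
  by (rule powser_nonneg_lipschitz) (use assms in \<open>auto intro: less_imp_le deriv_coeff_pos summable_deriv_coeff\<close>)

lemma deriv_coeff_tail_le:
  assumes "mono_on {2..} \<phi>" "1 \<le> j" "j < k + s" "0 \<le> R" "R \<le> real j"
  shows "deriv_coeff \<phi> b s k * R ^ k \<le> 2 / (2 ^ k * real (tail_factor \<phi> j (denom \<phi> j)))"
proof -
  define i where "i = k + s"
  define P where "P = real (tail_factor \<phi> j (denom \<phi> j))"
  have i: "1 \<le> real i" using assms(2,3) by (simp add: i_def)
  have P: "1 \<le> P" using tail_factor_pos[OF denom_pos] by (simp add: P_def Suc_le_eq)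
  have "i ^ (2 * i) * 2 ^ i * tail_factor \<phi> j (denom \<phi> j) \<le> denom \<phi> i"
    by (rule denom_ge_tail_factor[OF assms(1,2)]) (use assms(3) in \<open>simp add: i_def\<close>)
  then have "real (i ^ (2 * i) * 2 ^ i * tail_factor \<phi> j (denom \<phi> j)) \<le> real (denom \<phi> i)"
    by (simp only: of_nat_le_iff)
  then have D: "real i ^ (2 * i) * 2 ^ i * P \<le> denom \<phi> i" by (simp add: P_def)
  have "pochhammer (Suc k) s * digit b i \<le> i ^ s * 2"
    using pochhammer_Suc_le_power[of k s] digit_le_2[of b i] by (intro mult_le_mono) (simp_all add: i_def)
  then have num: "real (pochhammer (Suc k) s * digit b i) \<le> real i ^ s * 2"
    by (metis of_nat_le_iff of_nat_mult of_nat_power of_nat_numeral)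
  have "R ^ k \<le> real i ^ k" using assms(3-5) by (intro power_mono) (auto simp: i_def)
  have "deriv_coeff \<phi> b s k * R ^ k = real (pochhammer (Suc k) s * digit b i) / denom \<phi> i * R ^ k"
    by (simp add: deriv_coeff_def i_def)
  also have "\<dots> \<le> real i ^ s * 2 / denom \<phi> i * real i ^ k"
    using num \<open>R ^ k \<le> real i ^ k\<close> assms(4) by (intro mult_mono divide_right_mono) auto
  also have "\<dots> = 2 * real i ^ i / denom \<phi> i" by (simp add: i_def power_add field_simps)
  also have "\<dots> \<le> 2 * real i ^ i / (real i ^ (2 * i) * 2 ^ i * P)"
    using D i P denom_pos[of \<phi> i] by (intro divide_left_mono mult_pos_pos) auto
  also have "\<dots> = 2 / (real i ^ i * (2 ^ i * P))"
  proof -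
    have "real i ^ (2 * i) = real i ^ i * real i ^ i" by (metis mult_2 power_add)
    then show ?thesis using i by (simp add: field_simps)
  qed
  also have "\<dots> \<le> 2 / (2 ^ i * P)"
    using mult_right_mono[of 1 "real i ^ i" "2 ^ i * P"] i P
    by (intro divide_left_mono) (auto simp: one_le_power)
  also have "\<dots> \<le> 2 / (2 ^ k * P)"
    using P by (intro divide_left_mono mult_right_mono power_increasing) (auto simp: i_def)
  finally show ?thesis by (simp add: P_def)
qed

lemma deriv_series_minus_partial_sum:
  "deriv_series \<phi> b s x - deriv_partial_sum \<phi> b s n x = (\<Sum>i. deriv_coeff \<phi> b s (i + Suc n) * x ^ (i + Suc n))"
  using suminf_split_initial_segment[OF summable_deriv_coeff, of \<phi> b s x "Suc n"]
  by (simp add: deriv_series_def deriv_partial_sum_def lessThan_Suc_atMost)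

lemma deriv_series_tail_le:
  assumes "mono_on {2..} \<phi>" "1 \<le> n" "\<bar>x\<bar> \<le> R" "R \<le> real (n + s)"
  shows "\<bar>deriv_series \<phi> b s x - deriv_partial_sum \<phi> b s n x\<bar> \<le> 1 / tail_factor \<phi> (n + s) (denom \<phi> (n + s))"
proof -
  define P where "P = real (tail_factor \<phi> (n + s) (denom \<phi> (n + s)))"
  have P: "1 \<le> P" using tail_factor_pos[OF denom_pos] by (simp add: P_def Suc_le_eq)
  have geom: "(\<lambda>i. 1 / (2 * P) * (1 / 2) ^ i) sums (1 / P)"
    using sums_mult[OF geometric_sums[of "1/2::real"], of "1 / (2 * P)"] by simp
  have term_le: "\<bar>deriv_coeff \<phi> b s k * x ^ k\<bar> \<le> 1 / (2 * P) * (1 / 2) ^ i" if k: "k = i + Suc n" for i k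
  proof -
    have "\<bar>deriv_coeff \<phi> b s k * x ^ k\<bar> \<le> deriv_coeff \<phi> b s k * R ^ k"
      using assms(3) deriv_coeff_pos[of \<phi> b s k]
      by (simp add: abs_mult power_abs mult_left_mono power_mono)
    also have "\<dots> \<le> 2 / (2 ^ k * P)"
      unfolding P_def using assms k by (intro deriv_coeff_tail_le) auto
    also have "\<dots> \<le> 2 / (2 ^ (i + 2) * P)"
      using P k assms(2) by (intro divide_left_mono mult_right_mono power_increasing) auto
    also have "\<dots> = 1 / (2 * P) * (1 / 2) ^ i" by (simp add: field_simps power_add)
    finally show ?thesis .
  qed
  have "norm (\<Sum>i. deriv_coeff \<phi> b s (i + Suc n) * x ^ (i + Suc n)) \<le> (\<Sum>i. 1 / (2 * P) * (1 / 2) ^ i)"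
    using term_le[OF refl] sums_summable[OF geom] by (intro norm_suminf_le) auto
  then have "\<bar>\<Sum>i. deriv_coeff \<phi> b s (i + Suc n) * x ^ (i + Suc n)\<bar> \<le> 1 / P"
    using sums_unique[OF geom] by simp
  then show ?thesis by (simp add: deriv_series_minus_partial_sum P_def)
qed

lemma power_le_power_approx_order:
  fixes Q K :: real
  assumes "2 \<le> Q" "1 \<le> d" "0 \<le> K" "2 * K \<le> 2 ^ j" "n \<le> j"
  shows "2 * K * (Q ^ n * d) ^ n \<le> Q ^ Suc (approx_order j d)"
proof -
  have "real d \<le> 2 ^ d" using less_exp[of d] by (metis less_imp_le of_nat_le_iff of_nat_numeral of_nat_power)
  also have "\<dots> \<le> Q ^ d" using assms(1) by (intro power_mono) auto
  finally have "real d ^ n \<le> (Q ^ d) ^ n" by (intro power_mono) auto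
  also have "\<dots> \<le> (Q ^ d) ^ j"
    using assms by (intro power_increasing) (auto simp: one_le_power)
  finally have dQ: "real d ^ n \<le> Q ^ (j * d)" by (simp add: power_mult mult.commute)
  have KQ: "2 * K \<le> Q ^ j" using assms by (meson order_trans power_mono zero_le_numeral)
  have "2 * K * (Q ^ n * d) ^ n = Q ^ (n * n) * (2 * K * real d ^ n)"
    by (simp add: power_mult_distrib power_mult[symmetric] mult_ac)
  also have "\<dots> \<le> Q ^ (n * n) * (Q ^ j * Q ^ (j * d))"
    using KQ dQ assms by (intro mult_left_mono mult_mono) auto
  also have "\<dots> = Q ^ (n * n + j + j * d)" by (simp add: power_add)
  also have "\<dots> \<le> Q ^ Suc (approx_order j d)"
    using assms mult_le_mono[OF assms(5) assms(5)]
    by (intro power_increasing) (auto simp: approx_order_def)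
  finally show ?thesis .
qed

lemma power_le_tail_factor:
  fixes Q :: real
  assumes "2 \<le> Q" "Q \<le> \<phi> (approx_order j d)" "1 \<le> d" "n \<le> j"
  shows "2 * (Q ^ n * d) ^ n \<le> tail_factor \<phi> j d"
proof -
  define B where "B = real (denom_bound \<phi> j d)"
  have QB: "Q \<le> B" using assms(2) unfolding B_def denom_bound_def by linarith
  have "Q ^ n * d \<le> B ^ j * d"
    using assms QB by (intro mult_right_mono order_trans[OF power_mono power_increasing]) auto
  moreover have "1 * 1 \<le> Q ^ n * d"
    using assms by (intro mult_mono) (auto simp: one_le_power)
  ultimately have "(Q ^ n * d) ^ n \<le> (B ^ j * d) ^ n" by (intro power_mono) auto
  also have "\<dots> \<le> (B ^ j * d) ^ j"
    using assms(4) \<open>1 * 1 \<le> Q ^ n * d\<close> \<open>Q ^ n * d \<le> B ^ j * d\<close> by (intro power_increasing) auto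
  finally have "(Q ^ n * d) ^ n \<le> (B ^ j * d) ^ j" .
  then show ?thesis by (simp add: tail_factor_def B_def)
qed

lemma deriv_series_approx:
  assumes "mono_on {2..} \<phi>" "1 \<le> n" "R = \<bar>\<zeta>\<bar> + 1" "R \<le> real (n + s)"
    and "2 * deriv_series \<phi> b (Suc s) R \<le> 2 ^ (n + s)"
    and "2 \<le> q" "real_of_int q \<le> \<phi> (approx_order (n + s) (denom \<phi> (n + s)))"
    and "\<bar>\<zeta> - p / q\<bar> \<le> 1 / real_of_int q ^ Suc (approx_order (n + s) (denom \<phi> (n + s)))"
  shows "\<bar>deriv_series \<phi> b s \<zeta> - deriv_partial_sum \<phi> b s n (p / q)\<bar>
    \<le> 1 / (real_of_int q ^ n * denom \<phi> (n + s)) ^ n"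
proof -
  define j where "j = n + s"
  define D where "D = denom \<phi> j"
  define Q where "Q = real_of_int q"
  define K where "K = deriv_series \<phi> b (Suc s) R"
  define X where "X = Q ^ n * D"
  have Q: "2 \<le> Q" using assms(6) by (simp add: Q_def)
  have D: "1 \<le> D" using denom_pos[of \<phi> j] by (simp add: D_def Suc_le_eq)
  have X: "0 < X" using Q D by (simp add: X_def)
  have K: "0 \<le> K" using deriv_series_abs_le[of R R \<phi> b "Suc s"] assms(3) by (simp add: K_def)
  have "1 \<le> Q ^ Suc (approx_order j D)" using Q by (intro one_le_power) simp
  then have close: "\<bar>\<zeta> - p / q\<bar> \<le> 1 / Q ^ Suc (approx_order j D)" "\<bar>\<zeta> - p / q\<bar> \<le> 1"
    using assms(8) order_trans[OF assms(8)] by (simp_all add: Q_def D_def j_def)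
  have lipschitz: "\<bar>deriv_series \<phi> b s \<zeta> - deriv_series \<phi> b s (p / q)\<bar> \<le> 1 / (2 * X ^ n)"
  proof -
    have "2 * K * X ^ n \<le> Q ^ Suc (approx_order j D)"
      unfolding X_def using Q D K assms(2,5)
      by (intro power_le_power_approx_order) (auto simp: K_def j_def)
    then have bound: "K * (1 / Q ^ Suc (approx_order j D)) \<le> 1 / (2 * X ^ n)"
      using Q X by (simp add: field_simps)
    have "\<bar>deriv_series \<phi> b s \<zeta> - deriv_series \<phi> b s (p / q)\<bar> \<le> K * \<bar>\<zeta> - p / q\<bar>"
      unfolding K_def using close(2) assms(3) by (intro deriv_series_lipschitz) auto
    also have "\<dots> \<le> K * (1 / Q ^ Suc (approx_order j D))" using close(1) K by (rule mult_left_mono)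
    finally show ?thesis using bound by linarith
  qed
  have tail: "\<bar>deriv_series \<phi> b s (p / q) - deriv_partial_sum \<phi> b s n (p / q)\<bar> \<le> 1 / (2 * X ^ n)"
  proof -
    have "2 * X ^ n \<le> tail_factor \<phi> j D"
      unfolding X_def D_def Q_def using assms(6,7) denom_pos[of \<phi> j]
      by (intro power_le_tail_factor) (auto simp: j_def Suc_le_eq)
    then have "1 / real (tail_factor \<phi> j D) \<le> 1 / (2 * X ^ n)"
      using X tail_factor_pos[OF denom_pos, of \<phi> j \<phi> j] by (intro divide_left_mono mult_pos_pos) (auto simp: D_def)
    moreover have "\<bar>deriv_series \<phi> b s (p / q) - deriv_partial_sum \<phi> b s n (p / q)\<bar> \<le> 1 / tail_factor \<phi> j D"
      unfolding j_def D_def using close(2) assms(1-4) by (intro deriv_series_tail_le) auto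
    ultimately show ?thesis by linarith
  qed
  have "1 / (2 * X ^ n) + 1 / (2 * X ^ n) = 1 / X ^ n" by simp
  then show ?thesis using lipschitz tail by (simp add: X_def Q_def D_def j_def)
qed

section \<open>Liouville values\<close>

definition partial_sum_numer :: "(real \<Rightarrow> real) \<Rightarrow> (nat \<Rightarrow> bool) \<Rightarrow> nat \<Rightarrow> nat \<Rightarrow> nat \<Rightarrow> int" where
  "partial_sum_numer \<phi> b s n k =
     int (pochhammer (Suc k) s * digit b (k + s) * (denom \<phi> (n + s) div denom \<phi> (k + s)))"

lemma deriv_partial_sum_rational:
  assumes "q \<noteq> 0"
  shows "deriv_partial_sum \<phi> b s n (p / q)
    = of_int (\<Sum>k\<le>n. partial_sum_numer \<phi> b s n k * p ^ k * q ^ (n - k)) / of_int (q ^ n * int (denom \<phi> (n + s)))"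
proof -
  have "deriv_coeff \<phi> b s k * (p / q) ^ k * (real_of_int q ^ n * denom \<phi> (n + s))
      = of_int (partial_sum_numer \<phi> b s n k * p ^ k * q ^ (n - k))" if "k \<le> n" for k
  proof -
    have "denom \<phi> (k + s) dvd denom \<phi> (n + s)" using that by (intro denom_dvd) simp
    then have "real (denom \<phi> (n + s) div denom \<phi> (k + s)) = real (denom \<phi> (n + s)) / denom \<phi> (k + s)"
      by (rule real_of_nat_div)
    moreover have "real_of_int q ^ n = real_of_int q ^ k * real_of_int q ^ (n - k)"
      using that by (simp flip: power_add)
    ultimately show ?thesis
      using assms denom_pos[of \<phi> "k + s"]
      by (simp add: deriv_coeff_def partial_sum_numer_def power_divide field_simps)
  qed
  then have "deriv_partial_sum \<phi> b s n (p / q) * (real_of_int q ^ n * denom \<phi> (n + s))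
      = of_int (\<Sum>k\<le>n. partial_sum_numer \<phi> b s n k * p ^ k * q ^ (n - k))"
    by (simp add: deriv_partial_sum_def sum_distrib_right)
  then show ?thesis using assms denom_pos[of \<phi> "n + s"] by (simp add: eq_divide_eq)
qed

lemma partial_sum_root_denom_le:
  fixes u v a d :: int
  assumes "0 < d" "0 < v" "coprime u v" "1 \<le> n"
    and "deriv_partial_sum \<phi> b s n (u / v) = a / d"
  shows "v \<le> 2 * d * int (n + s) ^ s"
proof -
  define e where "e k = d * partial_sum_numer \<phi> b s n k" for k
  define Z where "Z = (\<Sum>k\<le>n. partial_sum_numer \<phi> b s n k * u ^ k * v ^ (n - k))"
  have "real_of_int Z / real_of_int (v ^ n * int (denom \<phi> (n + s))) = a / d"
    using deriv_partial_sum_rational[of v \<phi> b s n u] assms(2,5) by (simp add: Z_def)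
  then have "real_of_int (d * Z) = real_of_int (a * (v ^ n * int (denom \<phi> (n + s))))"
    using assms(1,2) denom_pos[of \<phi> "n + s"] by (simp add: frac_eq_eq field_simps)
  then have "d * Z = a * v ^ n * denom \<phi> (n + s)" by (simp only: of_int_eq_iff mult.assoc)
  then have "v dvd (\<Sum>k\<le>n. e k * u ^ k * v ^ (n - k))"
    using assms(4) by (simp add: Z_def e_def sum_distrib_left mult_ac dvd_power)
  with assms(3,4) have "v dvd e n" by (rule dvd_last_coeff_of_root)
  moreover have en: "e n = d * int (pochhammer (Suc n) s * digit b (n + s))"
    using denom_pos[of \<phi> "n + s"] by (simp add: e_def partial_sum_numer_def)
  moreover have "0 < pochhammer (Suc n) s * digit b (n + s)"
    using pochhammer_Suc_pos digit_pos by simp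
  ultimately have "v \<le> e n" using assms(1) by (intro zdvd_imp_le) auto
  also have "\<dots> \<le> d * int ((n + s) ^ s * 2)"
    unfolding en using assms(1) pochhammer_Suc_le_power digit_le_2
    by (intro mult_left_mono) (auto simp del: of_nat_mult intro: mult_le_mono)
  finally show ?thesis by (simp add: mult_ac)
qed

lemma partial_sum_eq_of_rational_value:
  fixes p q a d :: int
  assumes "deriv_series \<phi> b s \<zeta> = a / d" "0 < d" "2 \<le> q" "d < n"
    and "\<bar>deriv_series \<phi> b s \<zeta> - deriv_partial_sum \<phi> b s n (p / q)\<bar> \<le> 1 / (real_of_int q ^ n * denom \<phi> (n + s)) ^ n"
  shows "deriv_partial_sum \<phi> b s n (p / q) = a / d"
proof -
  define X where "X = q ^ n * int (denom \<phi> (n + s))"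
  define Y where "Y = (\<Sum>k\<le>n. partial_sum_numer \<phi> b s n k * p ^ k * q ^ (n - k))"
  have "int n \<le> denom \<phi> (n + s)" using le_denom[of "n + s" \<phi>] by linarith
  also have "\<dots> \<le> X" unfolding X_def
    using mult_right_mono[of 1 "q ^ n" "int (denom \<phi> (n + s))"] assms(3) by (simp add: one_le_power)
  finally have Xn: "int n \<le> X" .
  have T: "deriv_partial_sum \<phi> b s n (p / q) = Y / X"
    using deriv_partial_sum_rational[of q \<phi> b s n p] assms(3) by (simp add: X_def Y_def)
  have "real_of_int d * X < real_of_int X ^ 2"
    using mult_strict_right_mono[of "real_of_int d" "real_of_int X" "real_of_int X"] Xn assms(2,4)
    by (simp add: power2_eq_square)
  also have "\<dots> \<le> real_of_int X ^ n"
    using Xn assms(2,4) by (intro power_increasing) auto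
  finally have "1 / real_of_int X ^ n < 1 / (real_of_int d * X)"
    using Xn assms(2,4) by (intro divide_strict_left_mono) auto
  then have "\<bar>a / d - Y / X\<bar> < 1 / (real_of_int d * X)"
    using assms(1,5) T by (simp add: X_def)
  then have "real_of_int a / d = Y / X"
    using Xn assms(2,4) by (intro rat_eq_of_close) auto
  then show ?thesis using T by simp
qed

lemma deriv_series_approximations:
  assumes "mono_on {2..} \<phi>" "phi_approximable \<phi> \<zeta>"
  obtains n0 :: nat and p q :: "nat \<Rightarrow> int" where "\<And>n. n0 \<le> n \<Longrightarrow> 2 \<le> q n"
    and "\<And>n. n0 \<le> n \<Longrightarrow> \<bar>\<zeta> - p n / q n\<bar> \<le> 1 / 2 ^ ((n + s) * (n + s))"
    and "\<And>n. n0 \<le> n \<Longrightarrow> \<bar>deriv_series \<phi> b s \<zeta> - deriv_partial_sum \<phi> b s n (p n / q n)\<bar>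
           \<le> 1 / (real_of_int (q n) ^ n * denom \<phi> (n + s)) ^ n"
proof -
  obtain N0 where N0: "\<And>N. N0 \<le> N \<Longrightarrow> \<exists>(q::int) (p::int). 2 \<le> q \<and> real_of_int q \<le> \<phi> (real N) \<and>
      \<bar>\<zeta> - p / q\<bar> \<le> 1 / real_of_int q ^ Suc N"
    using assms(2) unfolding phi_approximable_def by blast
  define R where "R = \<bar>\<zeta>\<bar> + 1"
  define n0 where "n0 = N0 + nat \<lceil>R\<rceil> + nat \<lceil>2 * deriv_series \<phi> b (Suc s) R\<rceil> + 1"
  have "\<exists>(p::int) (q::int). 2 \<le> q \<and> \<bar>\<zeta> - p / q\<bar> \<le> 1 / 2 ^ ((n + s) * (n + s)) \<and>
      \<bar>deriv_series \<phi> b s \<zeta> - deriv_partial_sum \<phi> b s n (p / q)\<bar> \<le> 1 / (real_of_int q ^ n * denom \<phi> (n + s)) ^ n"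
    if n: "n0 \<le> n" for n
  proof -
    define N where "N = approx_order (n + s) (denom \<phi> (n + s))"
    have N: "(n + s) * (n + s) \<le> N" "n \<le> N" by (auto simp: N_def approx_order_def)
    obtain q p :: int where qp: "2 \<le> q" "real_of_int q \<le> \<phi> (real N)"
      "\<bar>\<zeta> - p / q\<bar> \<le> 1 / real_of_int q ^ Suc N"
      using N0[of N] N(2) n unfolding n0_def by fastforce
    have "(2::real) ^ ((n + s) * (n + s)) \<le> real_of_int q ^ Suc N"
      using qp(1) N(1) by (intro order_trans[OF power_increasing power_mono]) auto
    then have "1 / real_of_int q ^ Suc N \<le> 1 / 2 ^ ((n + s) * (n + s))"
      using qp(1) by (intro divide_left_mono) auto
    then have "\<bar>\<zeta> - p / q\<bar> \<le> 1 / 2 ^ ((n + s) * (n + s))" using qp(3) by linarith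
    moreover have "\<bar>deriv_series \<phi> b s \<zeta> - deriv_partial_sum \<phi> b s n (p / q)\<bar>
        \<le> 1 / (real_of_int q ^ n * denom \<phi> (n + s)) ^ n"
    proof (rule deriv_series_approx[OF assms(1) _ R_def])
      have "real (n + s) < 2 ^ (n + s)" using less_exp[of "n + s"] by (metis of_nat_less_iff of_nat_numeral of_nat_power)
      then show "2 * deriv_series \<phi> b (Suc s) R \<le> 2 ^ (n + s)" using n unfolding n0_def by linarith
      show "R \<le> real (n + s)" "1 \<le> n" using n unfolding n0_def by linarith+
    qed (use qp in \<open>simp_all add: N_def\<close>)
    ultimately show ?thesis using qp(1) by blast
  qed
  then obtain p q :: "nat \<Rightarrow> int" where "\<And>n. n0 \<le> n \<Longrightarrow> 2 \<le> q n \<and> \<bar>\<zeta> - p n / q n\<bar> \<le> 1 / 2 ^ ((n + s) * (n + s)) \<and>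
      \<bar>deriv_series \<phi> b s \<zeta> - deriv_partial_sum \<phi> b s n (p n / q n)\<bar> \<le> 1 / (real_of_int (q n) ^ n * denom \<phi> (n + s)) ^ n"
    by metis
  then show ?thesis using that[of n0 q p] by blast
qed

lemma deriv_partial_sum_Suc:
  "deriv_partial_sum \<phi> b s (Suc n) t = deriv_partial_sum \<phi> b s n t + deriv_coeff \<phi> b s (Suc n) * t ^ Suc n"
  by (simp add: deriv_partial_sum_def)

lemma deriv_series_irrational:
  assumes "mono_on {2..} \<phi>" "phi_approximable \<phi> \<zeta>" "\<zeta> \<noteq> 0"
  shows "deriv_series \<phi> b s \<zeta> \<notin> \<rat>"
proof
  assume "deriv_series \<phi> b s \<zeta> \<in> \<rat>"
  then obtain a :: int and B :: nat where B: "0 < B" "deriv_series \<phi> b s \<zeta> = a / B"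
    by (elim Rats_cases') (metis of_int_of_nat_eq pos_int_cases)
  obtain n0 :: nat and p q :: "nat \<Rightarrow> int" where q: "\<And>n. n0 \<le> n \<Longrightarrow> 2 \<le> q n"
    and close: "\<And>n. n0 \<le> n \<Longrightarrow> \<bar>\<zeta> - p n / q n\<bar> \<le> 1 / 2 ^ ((n + s) * (n + s))"
    and approx: "\<And>n. n0 \<le> n \<Longrightarrow> \<bar>deriv_series \<phi> b s \<zeta> - deriv_partial_sum \<phi> b s n (p n / q n)\<bar>
        \<le> 1 / (real_of_int (q n) ^ n * denom \<phi> (n + s)) ^ n"
    using deriv_series_approximations[OF assms(1,2), of s b] by metis
  define n1 where "n1 = n0 + B + 8 * B ^ 2 + 2 * s + 1"
  have partial_sum: "deriv_partial_sum \<phi> b s n (p n / q n) = a / B" if "n1 \<le> n" for n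
    using partial_sum_eq_of_rational_value[where d = "int B"] that B q[of n] approx[of n]
    unfolding n1_def by simp
  have "\<exists>(u::int) (v::int). 0 < v \<and> v \<le> int (2 * B * (n + s) ^ s) \<and> p n / q n = u / v"
    if "n1 \<le> n" for n
  proof -
    obtain u v :: int where uv: "0 < v" "coprime u v" "p n / q n = u / v"
      using Rats_cases'[of "p n / q n"] by (metis Rats_divide Rats_of_int)
    have "v \<le> 2 * int B * int (n + s) ^ s"
      using B(1) uv that partial_sum[OF that] unfolding n1_def
      by (intro partial_sum_root_denom_le) auto
    then show ?thesis using uv by auto
  qed
  then have x_eq: "p n / q n = \<zeta>" if "n1 \<le> n" for n
    using close that unfolding n1_def by (intro eq_of_rational_approximations_pow2) auto
  have "deriv_partial_sum \<phi> b s (Suc n1) \<zeta> = deriv_partial_sum \<phi> b s n1 \<zeta>"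
    using partial_sum[of n1] partial_sum[of "Suc n1"] x_eq[of n1] x_eq[of "Suc n1"] by simp
  then show False
    using deriv_coeff_pos[of \<phi> b s "Suc n1"] assms(3) by (simp add: deriv_partial_sum_Suc)
qed

lemma deriv_series_Liouville:
  assumes "mono_on {2..} \<phi>" "phi_approximable \<phi> \<zeta>" "\<zeta> \<noteq> 0"
  shows "deriv_series \<phi> b s \<zeta> \<in> Liouville_set"
proof (rule Liouville_setI)
  show "deriv_series \<phi> b s \<zeta> \<notin> \<rat>" using assms by (rule deriv_series_irrational)
  fix k
  obtain n0 :: nat and p q :: "nat \<Rightarrow> int" where q: "\<And>n. n0 \<le> n \<Longrightarrow> 2 \<le> q n"
    and approx: "\<And>n. n0 \<le> n \<Longrightarrow> \<bar>deriv_series \<phi> b s \<zeta> - deriv_partial_sum \<phi> b s n (p n / q n)\<bar>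
        \<le> 1 / (real_of_int (q n) ^ n * denom \<phi> (n + s)) ^ n"
    using deriv_series_approximations[OF assms(1,2), of s b] by metis
  define n where "n = max k n0"
  define X where "X = q n ^ n * int (denom \<phi> (n + s))"
  define Y where "Y = (\<Sum>i\<le>n. partial_sum_numer \<phi> b s n i * p n ^ i * q n ^ (n - i))"
  have "int (denom \<phi> (n + s)) \<le> X" unfolding X_def
    using mult_right_mono[of 1 "q n ^ n" "int (denom \<phi> (n + s))"] q[of n] by (simp add: n_def one_le_power)
  then have Xk: "int k \<le> X" and X1: "1 \<le> X"
    using le_denom[of "n + s" \<phi>] denom_pos[of \<phi> "n + s"] by (simp_all add: n_def)
  have "1 / real_of_int X ^ n \<le> 1 / real_of_int X ^ k"
    using X1 by (intro divide_left_mono power_increasing) (auto simp: n_def)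
  then have "\<bar>deriv_series \<phi> b s \<zeta> - Y / X\<bar> \<le> 1 / real_of_int X ^ k"
    using approx[of n] deriv_partial_sum_rational[of "q n" \<phi> b s n "p n"] q[of n]
    by (simp add: n_def X_def Y_def)
  then show "\<exists>(x::int) (y::int). 1 \<le> x \<and> int k \<le> x \<and> \<bar>deriv_series \<phi> b s \<zeta> - y / x\<bar> \<le> 1 / real_of_int x ^ k"
    using X1 Xk by blast
qed

section \<open>The entire functions\<close>

definition liouville_fun :: "(real \<Rightarrow> real) \<Rightarrow> (nat \<Rightarrow> bool) \<Rightarrow> complex \<Rightarrow> complex" where
  "liouville_fun \<phi> b z = (\<Sum>k. of_rat (liouville_coeff \<phi> b k) * z ^ k)"

lemma deriv_funpow_liouville_fun:
  "(deriv ^^ s) (liouville_fun \<phi> b) = (\<lambda>z. \<Sum>k. (diffs ^^ s) (\<lambda>k. of_rat (liouville_coeff \<phi> b k)) k * z ^ k)"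
  unfolding liouville_fun_def[abs_def] by (rule deriv_funpow_powser[OF summable_liouville_coeff])

lemma deriv_funpow_liouville_fun_of_real:
  "(deriv ^^ s) (liouville_fun \<phi> b) (of_real t) = of_real (deriv_series \<phi> b s t)"
proof -
  have "(deriv ^^ s) (liouville_fun \<phi> b) (of_real t) = (\<Sum>k. of_real (deriv_coeff \<phi> b s k * t ^ k))"
    by (simp add: deriv_funpow_liouville_fun diffs_funpow_liouville_coeff)
  also have "\<dots> = of_real (deriv_series \<phi> b s t)"
    unfolding deriv_series_def by (rule suminf_of_real[OF summable_deriv_coeff, symmetric])
  finally show ?thesis .
qed

lemma deriv_funpow_liouville_fun_0:
  "(deriv ^^ s) (liouville_fun \<phi> b) 0 = of_nat (pochhammer 1 s) * of_rat (liouville_coeff \<phi> b s)"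
  by (simp add: deriv_funpow_liouville_fun diffs_funpow)

lemma deriv_funpow_poly: "(deriv ^^ k) (poly p) = poly ((pderiv ^^ k) p)"
proof (induction k)
  case (Suc k)
  have "(deriv ^^ Suc k) (poly p) = deriv (poly ((pderiv ^^ k) p))" using Suc by simp
  also have "\<dots> = poly (pderiv ((pderiv ^^ k) p))"
    by (rule ext, rule DERIV_imp_deriv) (rule poly_DERIV)
  finally show ?case by simp
qed simp

lemma pderiv_funpow_Suc_degree: "(pderiv ^^ Suc (degree p)) (p :: 'a::{comm_semiring_1,semiring_no_zero_divisors,semiring_char_0} poly) = 0"
proof -
  have "degree ((pderiv ^^ k) p) = degree p - k" for k
    by (induction k) (simp_all add: degree_pderiv)
  then show ?thesis by (simp add: pderiv_eq_0_iff)
qed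

lemma entire_transcendental_liouville_fun: "entire_transcendental (liouville_fun \<phi> b)"
  unfolding entire_transcendental_def
proof
  show "liouville_fun \<phi> b holomorphic_on UNIV"
    unfolding liouville_fun_def[abs_def] holomorphic_on_def field_differentiable_def
    using termdiffs_strong_converges_everywhere[OF summable_liouville_coeff] by blast
  show "\<nexists>p. \<forall>z. liouville_fun \<phi> b z = poly p z"
  proof
    assume "\<exists>p. \<forall>z. liouville_fun \<phi> b z = poly p z"
    then obtain p where p: "liouville_fun \<phi> b = poly p" by auto
    define k where "k = Suc (degree p)"
    have "(deriv ^^ k) (liouville_fun \<phi> b) 0 = 0"
      unfolding p deriv_funpow_poly k_def pderiv_funpow_Suc_degree by simp
    moreover have "pochhammer (1::nat) k \<noteq> 0" by (simp add: pochhammer_pos)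
    ultimately show False
      using liouville_coeff_nonzero[of \<phi> b k] by (simp add: deriv_funpow_liouville_fun_0)
  qed
qed

lemma inj_liouville_fun: "inj (liouville_fun \<phi>)"
proof (rule injI)
  fix b b' assume eq: "liouville_fun \<phi> b = liouville_fun \<phi> b'"
  have "b k = b' k" for k
  proof -
    have "liouville_coeff \<phi> b k = liouville_coeff \<phi> b' k"
      using arg_cong[OF eq, of "\<lambda>f. (deriv ^^ k) f 0"] pochhammer_pos[of "1::nat" k]
      by (simp add: deriv_funpow_liouville_fun_0)
    then have "digit b k = digit b' k"
      using denom_pos[of \<phi> k] by (simp add: liouville_coeff_def)
    then show ?thesis by (simp add: digit_def split: if_splits)
  qed
  then show "b = b'" by blast
qed

lemma uncountable_UNIV_nat_bool: "uncountable (UNIV :: (nat \<Rightarrow> bool) set)"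
  unfolding uncountable_def
proof (intro conjI notI)
  assume "\<exists>f :: nat \<Rightarrow> nat \<Rightarrow> bool. range f = UNIV"
  then obtain f :: "nat \<Rightarrow> nat \<Rightarrow> bool" where "range f = UNIV" by blast
  then obtain m where "f m = (\<lambda>n. \<not> f n n)" by (metis UNIV_I rangeE)
  from fun_cong[OF this, of m] show False by simp
qed simp

lemma sums_liouville_fun: "(\<lambda>k. of_rat (liouville_coeff \<phi> b k) * z ^ k) sums liouville_fun \<phi> b z"
  unfolding liouville_fun_def by (rule summable_sums[OF summable_liouville_coeff])

lemma deriv_funpow_liouville_fun_values:
  assumes "\<phi> \<in> Phi_class"
  shows "(deriv ^^ s) (liouville_fun \<phi> b) 0 \<in> \<rat>"
    and "r \<in> \<rat> \<Longrightarrow> r \<noteq> 0 \<Longrightarrow> \<exists>l \<in> Liouville_set. (deriv ^^ s) (liouville_fun \<phi> b) (of_real r) = of_real l"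
    and "\<zeta> \<in> Liouville_phi_star \<phi> \<Longrightarrow> \<exists>l \<in> Liouville_set. (deriv ^^ s) (liouville_fun \<phi> b) (of_real \<zeta>) = of_real l"
proof -
  have mono: "mono_on {2..} \<phi>" and lim: "filterlim \<phi> at_top at_top"
    using assms by (simp_all add: Phi_class_def)
  show "(deriv ^^ s) (liouville_fun \<phi> b) 0 \<in> \<rat>" by (simp add: deriv_funpow_liouville_fun_0)
  show "\<exists>l \<in> Liouville_set. (deriv ^^ s) (liouville_fun \<phi> b) (of_real r) = of_real l"
    if "r \<in> \<rat>" "r \<noteq> 0"
    using deriv_series_Liouville[OF mono phi_approximable_rational[OF lim]] that
    by (auto simp: deriv_funpow_liouville_fun_of_real)
  show "\<exists>l \<in> Liouville_set. (deriv ^^ s) (liouville_fun \<phi> b) (of_real \<zeta>) = of_real l"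
    if "\<zeta> \<in> Liouville_phi_star \<phi>"
  proof -
    have "\<zeta> \<noteq> 0" using that by (auto simp: Liouville_phi_star_def Liouville_set_def)
    then show ?thesis
      using deriv_series_Liouville[OF mono phi_approximable_Liouville_phi_star[OF that]]
      by (auto simp: deriv_funpow_liouville_fun_of_real)
  qed
qed

theorem theorem4p3:
  fixes \<phi> :: "real \<Rightarrow> real"
  assumes "\<phi> \<in> Phi_class"
  shows "uncountable {f :: complex \<Rightarrow> complex.
     entire_transcendental f \<and>
     (\<exists>c :: nat \<Rightarrow> rat. (\<forall>j. c j \<noteq> 0) \<and>
        (\<forall>z. (\<lambda>j. of_rat (c j) * z ^ j) sums f z)) \<and>
     (\<forall>s::nat.
        (deriv ^^ s) f 0 \<in> \<rat> \<and>
        (\<forall>r::real. r \<in> \<rat> \<and> r \<noteq> 0 \<longrightarrow>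
            (\<exists>l \<in> Liouville_set. (deriv ^^ s) f (of_real r) = of_real l)) \<and>
        (\<forall>\<zeta> \<in> Liouville_phi_star \<phi>.
            (\<exists>l \<in> Liouville_set. (deriv ^^ s) f (of_real \<zeta>) = of_real l)))}"
  (is "uncountable ?S")
proof -
  have "range (liouville_fun \<phi>) \<subseteq> ?S"
    using entire_transcendental_liouville_fun liouville_coeff_nonzero sums_liouville_fun
      deriv_funpow_liouville_fun_values[OF assms] by blast
  moreover have "uncountable (range (liouville_fun \<phi>))"
  proof
    assume "countable (range (liouville_fun \<phi>))"
    then have "countable (UNIV :: (nat \<Rightarrow> bool) set)"
      using inj_liouville_fun by (rule countable_image_inj_on)
    then show False using uncountable_UNIV_nat_bool by simp
  qed
  ultimately show ?thesis by (meson countable_subset)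
qed

end
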